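(* Let $a,b,d\in\mathbb C$ with $a\notin\mathbb Z$ and $d\notin\{0,-1,-2,\dots\}$. Then, as an identity of formal power series in $x,y$, $$F(a,b;d;x)\,{}_0F_1(1-a;y)=\mathrm H_3(a,b;d;x,-y)+\sum_{k=1}^\infty\sum_{l=1}^k\frac{(-1)^{k-l}(k-1)!}{(l-1)!\,l!\,(k-l)!}\,\frac{(b)_l}{(1-a)_k(1-a)_{k-l}(d)_l}\,x^ly^k\,\mathrm H_3(a-k+l,b+l;d+l;x,-y).$$
   Context: Pochhammer symbol: $(\lambda)_k=\Gamma(\lambda+k)/\Gamma(\lambda)$ for every integer $k$ (possibly negative) whenever defined; $(\lambda)_0=1$. $F(a,b;c;x)=\sum_{k\ge0}\frac{(a)_k(b)_k}{(c)_k k!}x^k$, ${}_0F_1(c;x)=\sum_{k\ge0}\frac{x^k}{(c)_k k!}$. Confluent Horn function $\mathrm H_3(a,b;d;x,y)=\sum_{p,q\ge0}\frac{(a)_{p-q}(b)_p}{(d)_p\,p!\,q!}x^py^q$. All functions are regarded as formal power series in $x,y$; the infinite double sum converges in the formal (degree) topology. *)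

theory Defs
  imports Complex_Main
begin

text \<open>Formal power series in two variables x, y over the complex numbers are represented by
their coefficient functions: \<open>f p q\<close> is the coefficient of \<open>x^p y^q\<close>.\<close>

type_synonym bfps = "nat \<Rightarrow> nat \<Rightarrow> complex"

text \<open>Pochhammer symbol with integer index: (lambda)_k = Gamma(lambda+k)/Gamma(lambda).
For k >= 0 this is the usual rising factorial; for k = -m < 0 it is
Gamma(lambda-m)/Gamma(lambda) = 1/(lambda-m)_m.\<close>
definition poch_int :: "complex \<Rightarrow> int \<Rightarrow> complex" where
  "poch_int lam k = (if k \<ge> 0 then pochhammer lam (nat k)
                     else 1 / pochhammer (lam + of_int k) (nat (- k)))"

definition bmult :: "bfps \<Rightarrow> bfps \<Rightarrow> bfps" where
  "bmult f g = (\<lambda>p q. \<Sum>i\<le>p. \<Sum>j\<le>q. f i j * g (p - i) (q - j))"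

definition badd :: "bfps \<Rightarrow> bfps \<Rightarrow> bfps" where
  "badd f g = (\<lambda>p q. f p q + g p q)"

definition bshift :: "nat \<Rightarrow> nat \<Rightarrow> bfps \<Rightarrow> bfps" where
  "bshift l k f = (\<lambda>p q. if l \<le> p \<and> k \<le> q then f (p - l) (q - k) else 0)"

text \<open>Convergence of a series of formal power series in the formal (degree) topology:
every coefficient of the partial sums is eventually constant, equal to that of the sum.\<close>
definition formal_sums :: "(nat \<Rightarrow> bfps) \<Rightarrow> bfps \<Rightarrow> bool" where
  "formal_sums T S \<longleftrightarrow>
     (\<forall>p q. \<exists>N. \<forall>n\<ge>N. (\<Sum>k<n. T k p q) = S p q)"

definition gaussF :: "complex \<Rightarrow> complex \<Rightarrow> complex \<Rightarrow> bfps" where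
  "gaussF a b c = (\<lambda>p q. if q = 0 then pochhammer a p * pochhammer b p / (pochhammer c p * fact p)
                         else 0)"

definition hyp0F1_y :: "complex \<Rightarrow> bfps" where
  "hyp0F1_y c = (\<lambda>p q. if p = 0 then 1 / (pochhammer c q * fact q) else 0)"

definition H3_neg :: "complex \<Rightarrow> complex \<Rightarrow> complex \<Rightarrow> bfps" where
  "H3_neg a b d = (\<lambda>p q. poch_int a (int p - int q) * pochhammer b p
                          / (pochhammer d p * fact p * fact q) * (-1) ^ q)"

definition corr_term :: "complex \<Rightarrow> complex \<Rightarrow> complex \<Rightarrow> nat \<Rightarrow> bfps" where
  "corr_term a b d k = (\<lambda>p q. \<Sum>l\<in>{1..k}.
      ((-1) ^ (k - l) * fact (k - 1) / (fact (l - 1) * fact l * fact (k - l))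
       * pochhammer b l / (pochhammer (1 - a) k * pochhammer (1 - a) (k - l) * pochhammer d l))
      * bshift l k (H3_neg (a - of_nat k + of_nat l) (b + of_nat l) (d + of_nat l)) p q)"

end

theory Submission
  imports Defs "HOL-Analysis.Gamma_Function" "HOL-Computational_Algebra.Formal_Power_Series"
begin

text \<open>Since \<open>a \<notin> \<int>\<close>, every Pochhammer symbol built on \<open>a\<close> or \<open>1 - a\<close> is a ratio of values
  \<open>G n = \<Gamma>(a + n)\<close>, \<open>n \<in> \<int>\<close>, all nonzero. After pulling out a common factor, the coefficient of
  \<open>x^p y^q\<close> on the left is \<open>G p G(-q) / q!\<close>, that of \<open>H\<^sub>3\<close> is \<open>G(p-q) G 0 / q!\<close>, and the \<open>k\<close>-th
  correction term contributes \<open>G(p-q) G(-k) (p)\<^sub>k / (k! (q-k)!)\<close>, the inner sum over \<open>l\<close> collapsing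
  by Vandermonde's identity. Only the terms \<open>k \<le> q\<close> are nonzero, so the outer series converges
  formally, and the coefficient identity is the Chu--Vandermonde identity
  \<open>(p + a - q)\<^sub>q / q! = \<Sum>\<^sub>k (p)\<^sub>k (a - q)\<^sub>q\<^sub>-\<^sub>k / (k! (q-k)!)\<close>.\<close>

lemma plus_of_int_notin_nonpos_Ints:
  assumes "a \<notin> \<int>"
  shows "a + of_int n \<notin> \<int>\<^sub>\<le>\<^sub>0"
proof
  assume "a + of_int n \<in> \<int>\<^sub>\<le>\<^sub>0"
  then have "a + of_int n - of_int n \<in> \<int>"
    using nonpos_Ints_subset_Ints by (intro Ints_diff) auto
  with assms show False by simp
qed

definition Gamma_shift :: "complex \<Rightarrow> int \<Rightarrow> complex" where
  "Gamma_shift a n = Gamma (a + of_int n)"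

lemma Gamma_shift_nonzero: "a \<notin> \<int> \<Longrightarrow> Gamma_shift a n \<noteq> 0"
  unfolding Gamma_shift_def using plus_of_int_notin_nonpos_Ints Gamma_eq_zero_iff by blast

lemma pochhammer_eq_Gamma_shift_ratio:
  assumes "a \<notin> \<int>"
  shows "pochhammer (a + of_int j) n = Gamma_shift a (j + int n) / Gamma_shift a j"
  using pochhammer_Gamma[OF plus_of_int_notin_nonpos_Ints[OF assms, of j], of n]
  unfolding Gamma_shift_def by (simp add: add.assoc)

lemma poch_int_eq_Gamma_shift_ratio:
  assumes "a \<notin> \<int>"
  shows "poch_int (a + of_int j) n = Gamma_shift a (j + n) / Gamma_shift a j"
proof (cases "n \<ge> 0")
  case True
  then show ?thesis
    unfolding poch_int_def using pochhammer_eq_Gamma_shift_ratio[OF assms, of j "nat n"] by simp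
next
  case False
  have "poch_int (a + of_int j) n = 1 / pochhammer (a + of_int (j + n)) (nat (- n))"
    unfolding poch_int_def using False by (simp add: add.assoc)
  also have "\<dots> = 1 / (Gamma_shift a (j + n + int (nat (- n))) / Gamma_shift a (j + n))"
    by (subst pochhammer_eq_Gamma_shift_ratio[OF assms]) (rule refl)
  also have "\<dots> = Gamma_shift a (j + n) / Gamma_shift a j"
    using False by simp
  finally show ?thesis .
qed

lemma pochhammer_one_minus_eq_Gamma_shift_ratio:
  assumes "a \<notin> \<int>"
  shows "pochhammer (1 - a) k = (-1) ^ k * Gamma_shift a 0 / Gamma_shift a (- int k)"
proof -
  have "pochhammer (1 - a) k = (-1) ^ k * pochhammer (a + of_int (- int k)) k"
    using pochhammer_minus[of "a - 1" k] by (simp add: algebra_simps)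
  then show ?thesis
    using pochhammer_eq_Gamma_shift_ratio[OF assms, of "- int k" k] by simp
qed

lemma pochhammer_add_Vandermonde:
  fixes x y :: "'a :: field_char_0"
  shows "(\<Sum>k=0..n. pochhammer x k / fact k * (pochhammer y (n - k) / fact (n - k)))
           = pochhammer (x + y) n / fact n"
proof -
  have "(\<Sum>k=0..n. pochhammer x k / fact k * (pochhammer y (n - k) / fact (n - k)))
      = (\<Sum>k=0..n. (-1) ^ n * (((- x) gchoose k) * ((- y) gchoose (n - k))))"
  proof (rule sum.cong)
    fix k assume "k \<in> {0..n}"
    then have "(-1::'a) ^ k * (-1) ^ (n - k) = (-1) ^ n"
      by (simp flip: power_add)
    then show "pochhammer x k / fact k * (pochhammer y (n - k) / fact (n - k))
             = (-1) ^ n * (((- x) gchoose k) * ((- y) gchoose (n - k)))"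
      by (simp add: gbinomial_pochhammer)
  qed simp
  also have "\<dots> = (-1) ^ n * ((- (x + y)) gchoose n)"
    by (simp add: sum_distrib_left[symmetric] gbinomial_Vandermonde)
  also have "\<dots> = pochhammer (x + y) n / fact n"
    by (simp add: gbinomial_pochhammer add.commute)
  finally show ?thesis .
qed

lemma Gamma_shift_Vandermonde:
  assumes "a \<notin> \<int>"
  shows "Gamma_shift a (int p) * Gamma_shift a (- int q) / fact q
    = Gamma_shift a (int p - int q)
      * (\<Sum>k=0..q. Gamma_shift a (- int k) * pochhammer (of_nat p) k / (fact k * fact (q - k)))"
proof -
  let ?G = "Gamma_shift a"
  have nz: "?G n \<noteq> 0" for n
    using Gamma_shift_nonzero[OF assms] .
  have "(\<Sum>k=0..q. ?G (- int k) * pochhammer (of_nat p) k / (fact k * fact (q - k)))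
      = ?G (- int q) * (\<Sum>k=0..q. pochhammer (of_nat p) k / fact k
                          * (pochhammer (a + of_int (- int q)) (q - k) / fact (q - k)))"
    unfolding sum_distrib_left
  proof (rule sum.cong[OF refl])
    fix k assume "k \<in> {0..q}"
    then have "pochhammer (a + of_int (- int q)) (q - k) = ?G (- int k) / ?G (- int q)"
      using pochhammer_eq_Gamma_shift_ratio[OF assms, of "- int q" "q - k"] by simp
    then show "?G (- int k) * pochhammer (of_nat p) k / (fact k * fact (q - k))
       = ?G (- int q) * (pochhammer (of_nat p) k / fact k
           * (pochhammer (a + of_int (- int q)) (q - k) / fact (q - k)))"
      using nz by (simp add: field_simps)
  qed
  also have "\<dots> = ?G (- int q) * (pochhammer (a + of_int (int p - int q)) q / fact q)"
  proof -
    have "of_nat p + (a + of_int (- int q)) = a + of_int (int p - int q)"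
      by simp
    then show ?thesis
      by (simp only: pochhammer_add_Vandermonde)
  qed
  also have "\<dots> = ?G (- int q) * (?G (int p) / ?G (int p - int q) / fact q)"
    using pochhammer_eq_Gamma_shift_ratio[OF assms, of "int p - int q" q] by simp
  finally show ?thesis
    using nz by (simp add: field_simps)
qed

lemma sum_choose_pred_mult_choose:
  assumes "1 \<le> k"
  shows "(\<Sum>l=1..k. ((k - 1) choose (l - 1)) * (p choose l)) = (p + (k - 1)) choose k"
proof -
  have "(p + (k - 1)) choose k = (\<Sum>l\<le>k. (p choose l) * ((k - 1) choose (k - l)))"
    using vandermonde[of p "k - 1" k] by simp
  also have "\<dots> = (\<Sum>l=1..k. (p choose l) * ((k - 1) choose (k - l)))"
    using assms by (intro sum.mono_neutral_right) auto
  also have "\<dots> = (\<Sum>l=1..k. ((k - 1) choose (l - 1)) * (p choose l))"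
  proof (rule sum.cong[OF refl])
    fix l assume l: "l \<in> {1..k}"
    then have "(k - 1) choose (l - 1) = (k - 1) choose (k - l)"
      using binomial_symmetric[of "l - 1" "k - 1"] by auto
    then show "(p choose l) * ((k - 1) choose (k - l)) = ((k - 1) choose (l - 1)) * (p choose l)"
      by simp
  qed
  finally show ?thesis by simp
qed

lemma of_nat_choose_eq_pochhammer:
  assumes "1 \<le> k"
  shows "(of_nat ((p + (k - 1)) choose k) :: 'a :: field_char_0) = pochhammer (of_nat p) k / fact k"
proof -
  have "(of_nat ((p + (k - 1)) choose k) :: 'a) = of_nat (p + (k - 1)) gchoose k"
    by (simp add: binomial_gbinomial)
  also have "\<dots> = pochhammer (of_nat (p + (k - 1)) - of_nat k + 1) k / fact k"
    by (rule gbinomial_pochhammer')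
  also have "of_nat (p + (k - 1)) - of_nat k + 1 = (of_nat p :: 'a)"
    using assms by (simp add: of_nat_diff)
  finally show ?thesis .
qed

lemma bmult_separated_coeff:
  assumes "\<And>p q. q \<noteq> 0 \<Longrightarrow> f p q = 0" and "\<And>p q. p \<noteq> 0 \<Longrightarrow> g p q = 0"
  shows "bmult f g p q = f p 0 * g 0 q"
proof -
  have "(\<Sum>j\<le>q. f i j * g (p - i) (q - j)) = (if i = p then f p 0 * g 0 q else 0)" if "i \<le> p" for i
  proof -
    have "(\<Sum>j\<le>q. f i j * g (p - i) (q - j)) = (\<Sum>j\<le>q. if j = 0 then f i 0 * g (p - i) q else 0)"
      by (intro sum.cong refl) (simp add: assms(1))
    then show ?thesis
      using that by (simp add: assms(2))
  qed
  then have "bmult f g p q = (\<Sum>i\<le>p. if i = p then f p 0 * g 0 q else 0)"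
    unfolding bmult_def by (intro sum.cong refl) simp
  then show ?thesis
    by simp
qed

lemma formal_sums_if_vanishing:
  assumes "\<And>k p q. q < k \<Longrightarrow> T k p q = 0"
  shows "formal_sums T (\<lambda>p q. \<Sum>k\<le>q. T k p q)"
  unfolding formal_sums_def
proof (intro allI exI[of _ "Suc q" for q] impI)
  fix p q n :: nat
  assume "Suc q \<le> n"
  then show "(\<Sum>k<n. T k p q) = (\<Sum>k\<le>q. T k p q)"
    using assms by (intro sum.mono_neutral_right) auto
qed

lemma corr_term_vanishing: "q < k \<Longrightarrow> corr_term a b d k p q = 0"
  by (simp add: corr_term_def bshift_def)

definition coeff_scale :: "complex \<Rightarrow> complex \<Rightarrow> complex \<Rightarrow> nat \<Rightarrow> nat \<Rightarrow> complex" where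
  "coeff_scale a b d p q =
     (-1) ^ q * pochhammer b p / (pochhammer d p * fact p * Gamma_shift a 0 ^ 2)"

lemma pochhammer_nonzero_if_not_nonpos_int:
  fixes d :: complex
  assumes "\<forall>n::nat. d \<noteq> - of_nat n"
  shows "pochhammer d n \<noteq> 0"
  using assms by (auto simp: pochhammer_eq_0_iff)

lemma product_coeff:
  assumes "a \<notin> \<int>" and "\<forall>n::nat. d \<noteq> - of_nat n"
  shows "bmult (gaussF a b d) (hyp0F1_y (1 - a)) p q
    = coeff_scale a b d p q * (Gamma_shift a (int p) * Gamma_shift a (- int q) / fact q)"
proof -
  have "pochhammer a p = Gamma_shift a (int p) / Gamma_shift a 0"
    using pochhammer_eq_Gamma_shift_ratio[OF assms(1), of 0 p] by simp
  moreover have "(-1::complex) ^ q * (-1) ^ q = 1"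
    by (simp flip: power_add)
  ultimately show ?thesis
    using Gamma_shift_nonzero[OF assms(1)] pochhammer_nonzero_if_not_nonpos_int[OF assms(2)]
    by (simp add: bmult_separated_coeff gaussF_def hyp0F1_y_def coeff_scale_def
        pochhammer_one_minus_eq_Gamma_shift_ratio[OF assms(1)] field_simps power2_eq_square)
qed

lemma H3_neg_coeff:
  assumes "a \<notin> \<int>" and "\<forall>n::nat. d \<noteq> - of_nat n"
  shows "H3_neg a b d p q
    = coeff_scale a b d p q * Gamma_shift a (int p - int q) * (Gamma_shift a 0 / fact q)"
  using poch_int_eq_Gamma_shift_ratio[OF assms(1), of 0 "int p - int q"]
    Gamma_shift_nonzero[OF assms(1)] pochhammer_nonzero_if_not_nonpos_int[OF assms(2)]
  by (simp add: H3_neg_def coeff_scale_def field_simps power2_eq_square)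

lemma corr_summand_coeff:
  fixes a b d :: complex
  assumes "a \<notin> \<int>" and "\<forall>n::nat. d \<noteq> - of_nat n"
    and "1 \<le> l" and "l \<le> k" and "k \<le> q"
  shows "((-1) ^ (k - l) * fact (k - 1) / (fact (l - 1) * fact l * fact (k - l))
       * pochhammer b l / (pochhammer (1 - a) k * pochhammer (1 - a) (k - l) * pochhammer d l))
      * bshift l k (H3_neg (a - of_nat k + of_nat l) (b + of_nat l) (d + of_nat l)) p q
   = coeff_scale a b d p q * Gamma_shift a (int p - int q) * (Gamma_shift a (- int k) / fact (q - k))
     * (of_nat ((k - 1) choose (l - 1)) * of_nat (p choose l))"
proof (cases "l \<le> p")
  case False
  then show ?thesis by (simp add: bshift_def)
next
  case True
  let ?G = "Gamma_shift a"
  have shift: "a - of_nat k + of_nat l = a + of_int (int l - int k)"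
    by simp
  have exponent: "int (p - l) - int (q - k) = (int p - int q) - (int l - int k)"
    using True assms(5) by simp
  have poch_int_shift: "poch_int (a - of_nat k + of_nat l) (int (p - l) - int (q - k))
      = ?G (int p - int q) / ?G (int l - int k)"
    unfolding shift exponent poch_int_eq_Gamma_shift_ratio[OF assms(1)] by simp
  have sign: "(-1::complex) ^ (q - k) = (-1) ^ q * (-1) ^ k"
  proof -
    have "(-1::complex) ^ q = (-1) ^ (q - k) * (-1) ^ k"
      using assms(5) by (simp flip: power_add)
    moreover have "(-1::complex) ^ k * (-1) ^ k = 1"
      by (simp flip: power_add)
    ultimately show ?thesis
      by (metis mult.assoc mult.right_neutral)
  qed
  have poch_1ma: "pochhammer (1 - a) k = (-1) ^ k * ?G 0 / ?G (- int k)"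
    by (rule pochhammer_one_minus_eq_Gamma_shift_ratio[OF assms(1)])
  have poch_1ma_diff: "pochhammer (1 - a) (k - l) = (-1) ^ (k - l) * ?G 0 / ?G (int l - int k)"
    using pochhammer_one_minus_eq_Gamma_shift_ratio[OF assms(1), of "k - l"] assms(4) by simp
  have choose_pred: "(of_nat ((k - 1) choose (l - 1)) :: complex)
      = fact (k - 1) / (fact (l - 1) * fact (k - l))"
    using binomial_fact[where 'a=complex, of "l - 1" "k - 1"] assms(3,4) by simp
  have poch_b: "pochhammer b p = pochhammer b l * pochhammer (b + of_nat l) (p - l)"
    and poch_d: "pochhammer d p = pochhammer d l * pochhammer (d + of_nat l) (p - l)"
    using pochhammer_product[OF True] by blast+
  have "pochhammer d l \<noteq> 0" and "pochhammer (d + of_nat l) (p - l) \<noteq> 0"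
    using pochhammer_nonzero_if_not_nonpos_int[OF assms(2), of p] poch_d by auto
  then show ?thesis
    unfolding bshift_def H3_neg_def coeff_scale_def using True assms(5)
    apply (simp only: poch_int_shift poch_b poch_d poch_1ma poch_1ma_diff choose_pred sign
        binomial_fact[OF True] if_True simp_thms)
    using Gamma_shift_nonzero[OF assms(1)] by (simp add: field_simps power2_eq_square)
qed

lemma corr_term_coeff:
  assumes "a \<notin> \<int>" and "\<forall>n::nat. d \<noteq> - of_nat n"
    and "1 \<le> k" and "k \<le> q"
  shows "corr_term a b d k p q
   = coeff_scale a b d p q * Gamma_shift a (int p - int q)
     * (Gamma_shift a (- int k) * pochhammer (of_nat p) k / (fact k * fact (q - k)))"
proof -
  let ?c = "coeff_scale a b d p q * Gamma_shift a (int p - int q) * (Gamma_shift a (- int k) / fact (q - k))"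
  have "corr_term a b d k p q = (\<Sum>l=1..k. ?c * (of_nat ((k - 1) choose (l - 1)) * of_nat (p choose l)))"
    unfolding corr_term_def using assms by (intro sum.cong refl corr_summand_coeff) auto
  also have "\<dots> = ?c * of_nat (\<Sum>l=1..k. ((k - 1) choose (l - 1)) * (p choose l))"
    by (simp add: sum_distrib_left)
  also have "\<dots> = ?c * (pochhammer (of_nat p) k / fact k)"
    by (simp only: sum_choose_pred_mult_choose[OF assms(3)] of_nat_choose_eq_pochhammer[OF assms(3)])
  finally show ?thesis
    by (simp add: field_simps)
qed

theorem mainTheorem7:
  fixes a b d :: complex
  assumes "a \<notin> \<int>"
    and "\<forall>n::nat. d \<noteq> - of_nat n"
  shows "\<exists>S. formal_sums (\<lambda>k. if k = 0 then (\<lambda>p q. 0) else corr_term a b d k) S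
             \<and> bmult (gaussF a b d) (hyp0F1_y (1 - a)) = badd (H3_neg a b d) S"
proof -
  let ?T = "\<lambda>k. if k = 0 then (\<lambda>p q. 0) else corr_term a b d k"
  let ?S = "\<lambda>p q. \<Sum>k\<le>q. ?T k p q"
  let ?G = "Gamma_shift a"
  have "formal_sums ?T ?S"
    by (rule formal_sums_if_vanishing) (simp add: corr_term_vanishing)
  moreover have "bmult (gaussF a b d) (hyp0F1_y (1 - a)) p q = badd (H3_neg a b d) ?S p q" for p q
  proof -
    have "?S p q = (\<Sum>k=1..q. corr_term a b d k p q)"
      by (rule sum.mono_neutral_cong_right) auto
    also have "\<dots> = coeff_scale a b d p q * ?G (int p - int q)
        * (\<Sum>k=1..q. ?G (- int k) * pochhammer (of_nat p) k / (fact k * fact (q - k)))"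
      unfolding sum_distrib_left using assms by (intro sum.cong refl corr_term_coeff) auto
    finally show ?thesis
      using Gamma_shift_Vandermonde[OF assms(1), of p q]
      by (simp add: product_coeff[OF assms] H3_neg_coeff[OF assms] badd_def sum.atLeast_Suc_atMost
          algebra_simps)
  qed
  ultimately show ?thesis
    by blast
qed

end
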